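(* Let $\mathbb K$ be a field with $2\in\mathbb K^\times$, $A$ a unital commutative associative $\mathbb K$-algebra, $\mathfrak k$ a $\mathbb K$-Lie algebra, $\mathfrak g=A\otimes\mathfrak k$ and $\mathfrak z$ a vector space. A linear map $f=f_1\circ p_1+f_2\circ p_2+f_3\circ p_3:\Lambda^2(\mathfrak g)\to\mathfrak z$ is a 2-cocycle if and only if both $f_1\circ p_1+f_2\circ p_2$ and $f_3\circ p_3$ are 2-cocycles.
   Context: $\mathfrak g$ has bracket $[a\otimes x,a'\otimes x']=aa'\otimes[x,x']$, $ax=a\otimes x$, unit $\mathbf 1$. $v\wedge w=\tfrac12(v\otimes w-w\otimes v)$, $v\vee w=\tfrac12(v\otimes w+w\otimes v)$. $I_A$ is the kernel of multiplication $S^2(A)\to A$. $p_1(ax\wedge by)=a\wedge b\otimes x\vee y\in\Lambda^2(A)\otimes S^2(\mathfrak k)$, $p_2(ax\wedge by)=ab\otimes x\wedge y\in A\otimes\Lambda^2(\mathfrak k)$, $p_3(ax\wedge by)=(a\vee b-ab\vee\mathbf 1)\otimes x\wedge y\in I_A\otimes\Lambda^2(\mathfrak k)$; together they form a linear isomorphism of $\Lambda^2(\mathfrak g)$ onto the direct sum, and $f_1,f_2,f_3$ are arbitrary linear maps on these three spaces. A 2-cocycle is a linear map on $\Lambda^2(\mathfrak g)$ vanishing on the span of $[u,v]\wedge w+[v,w]\wedge u+[w,u]\wedge v$, $u,v,w\in\mathfrak g$. *)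

theory Defs
  imports Complex_Main
begin

text \<open>Tensor products, exterior and symmetric squares
  are not available in the library; linear maps out of them are encoded by their
  universal properties as multilinear maps.\<close>

definition unital_comm_alg ::
  "('K::field \<Rightarrow> 'A::ab_group_add \<Rightarrow> 'A) \<Rightarrow> ('A \<Rightarrow> 'A \<Rightarrow> 'A) \<Rightarrow> 'A \<Rightarrow> bool" where
  "unital_comm_alg sA mul one \<longleftrightarrow>
     vector_space sA
   \<and> (\<forall>a. Vector_Spaces.linear sA sA (mul a))
   \<and> (\<forall>a b c. mul (mul a b) c = mul a (mul b c))
   \<and> (\<forall>a b. mul a b = mul b a)
   \<and> (\<forall>a. mul one a = a)"

definition lie_alg ::
  "('K::field \<Rightarrow> 'k::ab_group_add \<Rightarrow> 'k) \<Rightarrow> ('k \<Rightarrow> 'k \<Rightarrow> 'k) \<Rightarrow> bool" where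
  "lie_alg sk br \<longleftrightarrow>
     vector_space sk
   \<and> (\<forall>x. Vector_Spaces.linear sk sk (br x))
   \<and> (\<forall>x. Vector_Spaces.linear sk sk (\<lambda>y. br y x))
   \<and> (\<forall>x. br x x = 0)
   \<and> (\<forall>x y z. br x (br y z) + br y (br z x) + br z (br x y) = 0)"

definition multilinear3 ::
  "('K::field \<Rightarrow> 'a::ab_group_add \<Rightarrow> 'a) \<Rightarrow> ('K \<Rightarrow> 'b::ab_group_add \<Rightarrow> 'b) \<Rightarrow>
   ('K \<Rightarrow> 'c::ab_group_add \<Rightarrow> 'c) \<Rightarrow> ('K \<Rightarrow> 'z::ab_group_add \<Rightarrow> 'z) \<Rightarrow>
   ('a \<Rightarrow> 'b \<Rightarrow> 'c \<Rightarrow> 'z) \<Rightarrow> bool" where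
  "multilinear3 s1 s2 s3 sz F \<longleftrightarrow>
     (\<forall>y w. Vector_Spaces.linear s1 sz (\<lambda>x. F x y w))
   \<and> (\<forall>x w. Vector_Spaces.linear s2 sz (\<lambda>y. F x y w))
   \<and> (\<forall>x y. Vector_Spaces.linear s3 sz (\<lambda>w. F x y w))"

definition multilinear4 ::
  "('K::field \<Rightarrow> 'a::ab_group_add \<Rightarrow> 'a) \<Rightarrow> ('K \<Rightarrow> 'b::ab_group_add \<Rightarrow> 'b) \<Rightarrow>
   ('K \<Rightarrow> 'c::ab_group_add \<Rightarrow> 'c) \<Rightarrow> ('K \<Rightarrow> 'd::ab_group_add \<Rightarrow> 'd) \<Rightarrow>
   ('K \<Rightarrow> 'z::ab_group_add \<Rightarrow> 'z) \<Rightarrow> ('a \<Rightarrow> 'b \<Rightarrow> 'c \<Rightarrow> 'd \<Rightarrow> 'z) \<Rightarrow> bool" where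
  "multilinear4 s1 s2 s3 s4 sz F \<longleftrightarrow>
     (\<forall>y w v. Vector_Spaces.linear s1 sz (\<lambda>x. F x y w v))
   \<and> (\<forall>x w v. Vector_Spaces.linear s2 sz (\<lambda>y. F x y w v))
   \<and> (\<forall>x y v. Vector_Spaces.linear s3 sz (\<lambda>w. F x y w v))
   \<and> (\<forall>x y w. Vector_Spaces.linear s4 sz (\<lambda>v. F x y w v))"

text \<open>A linear map f on Lambda^2(A \<otimes> k) is encoded by
  Phi a x b y = f((a \<otimes> x) \<wedge> (b \<otimes> y)).
  f_1 on Lambda^2(A) \<otimes> S^2(k) is encoded by F1 a b x y = f_1(a \<wedge> b \<otimes> x \<or> y);
  f_2 on A \<otimes> Lambda^2(k) by F2 c x y = f_2(c \<otimes> x \<wedge> y);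
  f_3 on I_A \<otimes> Lambda^2(k) (extended to S^2(A) \<otimes> Lambda^2(k)) by
  F3 a b x y = f_3(a \<or> b \<otimes> x \<wedge> y).\<close>

definition comp_p1 :: "('A \<Rightarrow> 'A \<Rightarrow> 'k \<Rightarrow> 'k \<Rightarrow> 'z) \<Rightarrow> 'A \<Rightarrow> 'k \<Rightarrow> 'A \<Rightarrow> 'k \<Rightarrow> 'z" where
  "comp_p1 F1 = (\<lambda>a x b y. F1 a b x y)"

definition comp_p2 :: "('A \<Rightarrow> 'A \<Rightarrow> 'A) \<Rightarrow> ('A \<Rightarrow> 'k \<Rightarrow> 'k \<Rightarrow> 'z) \<Rightarrow> 'A \<Rightarrow> 'k \<Rightarrow> 'A \<Rightarrow> 'k \<Rightarrow> 'z" where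
  "comp_p2 mul F2 = (\<lambda>a x b y. F2 (mul a b) x y)"

definition comp_p3 :: "('A \<Rightarrow> 'A \<Rightarrow> 'A) \<Rightarrow> 'A \<Rightarrow> ('A \<Rightarrow> 'A \<Rightarrow> 'k \<Rightarrow> 'k \<Rightarrow> 'z::ab_group_add)
    \<Rightarrow> 'A \<Rightarrow> 'k \<Rightarrow> 'A \<Rightarrow> 'k \<Rightarrow> 'z" where
  "comp_p3 mul one F3 = (\<lambda>a x b y. F3 a b x y - F3 (mul a b) one x y)"

text \<open>2-cocycle condition for Phi, with bracket [a x, a' x'] = a a' \<otimes> [x, x'],
  tested on pure tensors u = a x, v = a' x', w = a'' x''.\<close>
definition cocycle2 :: "('A \<Rightarrow> 'A \<Rightarrow> 'A) \<Rightarrow> ('k \<Rightarrow> 'k \<Rightarrow> 'k) \<Rightarrow>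
    ('A \<Rightarrow> 'k \<Rightarrow> 'A \<Rightarrow> 'k \<Rightarrow> 'z::ab_group_add) \<Rightarrow> bool" where
  "cocycle2 mul br Phi \<longleftrightarrow>
    (\<forall>a a' a'' x x' x''.
       Phi (mul a a') (br x x') a'' x'' + Phi (mul a' a'') (br x' x'') a x
     + Phi (mul a'' a) (br x'' x) a' x' = 0)"

end

theory Submission
  imports Defs
begin

text \<open>The reverse implication holds because 2-cocycles are closed under addition. For the
  forward one it suffices that f_3 o p_3 vanishes on every b[x,y] \<wedge> cz, since the cocycle
  identity only evaluates its argument there. Add the cocycle identities of f at (1, b, c; x, y, z)
  and (1, c, b; x, y, z): the f_1-terms cancel, and halving gives a relation among the values at
  b[x,y] \<wedge> cz, b[z,x] \<wedge> cy and bc[y,z] \<wedge> 1x. Its first two cyclic shifts in x, y, z minus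
  the third, minus the identity at (1, 1, bc; x, y, z), is twice the value of f_3 o p_3 at
  b[x,y] \<wedge> cz, which therefore vanishes. Only commutativity and the unit of A, the symmetry
  types of f_1 and f_3 in their A-arguments and the invertibility of 2 enter.\<close>

lemma (in vector_space) eq_0_if_add_self_eq_0:
  fixes v :: 'b
  assumes "(2::'a) \<noteq> 0" and "v + v = 0"
  shows "v = 0"
proof -
  have "scale 2 v = v + v"
    using scale_left_distrib[of 1 1 v] by simp
  with assms show ?thesis by simp
qed

lemma cocycle2_add_iff:
  assumes "cocycle2 mul br g"
  shows "cocycle2 mul br (\<lambda>a x b y. f a x b y + g a x b y) \<longleftrightarrow> cocycle2 mul br f"
proof -
  have split_sum: "f (mul a a') (br x x') a'' x'' + g (mul a a') (br x x') a'' x''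
      + (f (mul a' a'') (br x' x'') a x + g (mul a' a'') (br x' x'') a x)
      + (f (mul a'' a) (br x'' x) a' x' + g (mul a'' a) (br x'' x) a' x')
    = (f (mul a a') (br x x') a'' x'' + f (mul a' a'') (br x' x'') a x
        + f (mul a'' a) (br x'' x) a' x')
      + (g (mul a a') (br x x') a'' x'' + g (mul a' a'') (br x' x'') a x
        + g (mul a'' a) (br x'' x) a' x')" for a a' a'' x x' x''
    by (simp add: algebra_simps)
  show ?thesis
    using assms unfolding cocycle2_def split_sum by simp
qed

lemma cocycle2_if_vanishing_on_brackets:
  assumes "\<And>a x y b z. Phi a (br x y) b z = 0"
  shows "cocycle2 mul br Phi"
  using assms unfolding cocycle2_def by simp

context
  fixes mul :: "'A \<Rightarrow> 'A \<Rightarrow> 'A" and one :: 'A and br :: "'k \<Rightarrow> 'k \<Rightarrow> 'k"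
    and F1 F3 :: "'A \<Rightarrow> 'A \<Rightarrow> 'k \<Rightarrow> 'k \<Rightarrow> 'z::ab_group_add"
    and F2 :: "'A \<Rightarrow> 'k \<Rightarrow> 'k \<Rightarrow> 'z"
  assumes mul_commute: "\<And>a b. mul a b = mul b a"
    and mul_one_left: "\<And>a. mul one a = a"
    and F1_alt: "\<And>a b u w. F1 b a u w = - F1 a b u w"
    and F3_sym: "\<And>a b u w. F3 b a u w = F3 a b u w"
begin

lemma comp_p3_commute: "comp_p3 mul one F3 c u b w = comp_p3 mul one F3 b u c w"
  by (simp add: comp_p3_def F3_sym mul_commute)

lemma mul_one_right: "mul a one = a"
  using mul_commute mul_one_left by metis

lemma comp_p3_one_right: "comp_p3 mul one F3 a u one w = 0"
  by (simp add: comp_p3_def mul_one_right)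

lemma comp_p3_one_left: "comp_p3 mul one F3 one u a w = 0"
  using comp_p3_commute comp_p3_one_right by metis

lemma comp_p3_vanishes_on_brackets_if_cocycle2:
  fixes sz :: "'K::field \<Rightarrow> 'z \<Rightarrow> 'z"
  assumes cocycle: "cocycle2 mul br
      (\<lambda>a x b y. comp_p1 F1 a x b y + comp_p2 mul F2 a x b y + comp_p3 mul one F3 a x b y)"
    and two: "(2::'K) \<noteq> 0" and z: "vector_space sz"
  shows "comp_p3 mul one F3 b (br x y) c z = 0"
proof -
  interpret vector_space sz by (fact z)
  let ?G = "\<lambda>x y z. comp_p3 mul one F3 b (br x y) c z"
  let ?N = "\<lambda>x y z. F1 (mul b c) one (br x y) z"
  let ?M = "\<lambda>x y z. F2 (mul b c) (br x y) z + F2 (mul b c) (br y z) x + F2 (mul b c) (br z x) y"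
  note cocycle_at = cocycle[unfolded cocycle2_def, rule_format]
  note simps = comp_p1_def comp_p2_def comp_p3_one_left comp_p3_one_right comp_p3_commute[of c _ b]
    F1_alt[where a = b and b = c] F1_alt[where a = "mul b c" and b = one]
    mul_commute[of c b] mul_one_left mul_one_right
  have at_unit: "?G x y z + ?G z x y + ?N y z x + ?M x y z = 0" for x y z
  proof -
    let ?S = "?G x y z + ?G z x y + ?N y z x + ?M x y z"
    let ?H = "F1 b c (br x y) z - F1 b c (br z x) y"
    have "?H + ?S = 0"
      using cocycle_at[where a = one and a' = b and a'' = c and x' = y and x'' = z]
      by (simp add: simps algebra_simps)
    moreover have "- ?H + ?S = 0"
      using cocycle_at[where a = one and a' = c and a'' = b and x' = y and x'' = z]
      by (simp add: simps algebra_simps)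
    moreover have "?S + ?S = (?H + ?S) + (- ?H + ?S)"
      by (simp add: algebra_simps)
    ultimately have "?S + ?S = 0"
      by simp
    with two show ?thesis by (rule eq_0_if_add_self_eq_0)
  qed
  have at_unit_unit: "?N y z x + ?N z x y - ?N x y z + ?M x y z = 0"
    using cocycle_at[where a = one and a' = one and a'' = "mul b c" and x' = y and x'' = z]
    by (simp add: simps algebra_simps)
  have "?G x y z + ?G x y z
      = (?G x y z + ?G z x y + ?N y z x + ?M x y z) + (?G y z x + ?G x y z + ?N z x y + ?M y z x)
        - (?G z x y + ?G y z x + ?N x y z + ?M z x y) - (?N y z x + ?N z x y - ?N x y z + ?M x y z)"
    by (simp add: algebra_simps)
  also have "\<dots> = 0"
    using at_unit[of x y z] at_unit[of y z x] at_unit[of z x y] at_unit_unit by simp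
  finally show ?thesis using two by (rule eq_0_if_add_self_eq_0[rotated])
qed

end

theorem corollary3p2:
  fixes sA :: "'K::field \<Rightarrow> 'A::ab_group_add \<Rightarrow> 'A" and mul :: "'A \<Rightarrow> 'A \<Rightarrow> 'A" and one :: 'A
    and sk :: "'K \<Rightarrow> 'k::ab_group_add \<Rightarrow> 'k" and br :: "'k \<Rightarrow> 'k \<Rightarrow> 'k"
    and sz :: "'K \<Rightarrow> 'z::ab_group_add \<Rightarrow> 'z"
    and F1 :: "'A \<Rightarrow> 'A \<Rightarrow> 'k \<Rightarrow> 'k \<Rightarrow> 'z"
    and F2 :: "'A \<Rightarrow> 'k \<Rightarrow> 'k \<Rightarrow> 'z"
    and F3 :: "'A \<Rightarrow> 'A \<Rightarrow> 'k \<Rightarrow> 'k \<Rightarrow> 'z"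
  assumes two: "(2::'K) \<noteq> 0"
    and A: "unital_comm_alg sA mul one"
    and k: "lie_alg sk br"
    and z: "vector_space sz"
    and F1_ml: "multilinear4 sA sA sk sk sz F1"
    and F1_alt: "\<And>a b x y. F1 b a x y = - F1 a b x y"
    and F1_sym: "\<And>a b x y. F1 a b y x = F1 a b x y"
    and F2_ml: "multilinear3 sA sk sk sz F2"
    and F2_alt: "\<And>c x y. F2 c y x = - F2 c x y"
    and F3_ml: "multilinear4 sA sA sk sk sz F3"
    and F3_sym: "\<And>a b x y. F3 b a x y = F3 a b x y"
    and F3_alt: "\<And>a b x y. F3 a b y x = - F3 a b x y"
  shows "cocycle2 mul br
           (\<lambda>a x b y. comp_p1 F1 a x b y + comp_p2 mul F2 a x b y + comp_p3 mul one F3 a x b y)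
         \<longleftrightarrow> cocycle2 mul br (\<lambda>a x b y. comp_p1 F1 a x b y + comp_p2 mul F2 a x b y)
           \<and> cocycle2 mul br (comp_p3 mul one F3)"
proof -
  have mul_commute: "\<And>a b. mul a b = mul b a" and mul_one_left: "\<And>a. mul one a = a"
    using A by (auto simp: unital_comm_alg_def)
  have p3: "cocycle2 mul br (comp_p3 mul one F3)"
    if "cocycle2 mul br
      (\<lambda>a x b y. comp_p1 F1 a x b y + comp_p2 mul F2 a x b y + comp_p3 mul one F3 a x b y)"
    by (rule cocycle2_if_vanishing_on_brackets,
        rule comp_p3_vanishes_on_brackets_if_cocycle2[OF mul_commute mul_one_left F1_alt F3_sym
          that two z])
  show ?thesis
    using p3 cocycle2_add_iff[of mul br "comp_p3 mul one F3"
        "\<lambda>a x b y. comp_p1 F1 a x b y + comp_p2 mul F2 a x b y"]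
    by blast
qed

end
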